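(* Let $A$ be a ribbon Littlewood–Richardson tableau of shape $\alpha=(\alpha_1,\dots,\alpha_m)$, and let $i\in\{1,\dots,m-1\}$ with $\alpha_i>\alpha_{i+1}$. Let $A_{(i\ i+1)}$ be the ribbon tableau of shape $\alpha_{(i\ i+1)}$ obtained from $A$ by applying the $R$-matrix algorithm to rows $i$ and $i+1$ (all other rows unchanged). Then $A_{(i\ i+1)}$ is a Yamanouchi tableau.
   Context: Ribbons: a composition $\alpha=(\alpha_1,\dots,\alpha_m)$ (each $\alpha_i\ge 2$) determines the ribbon skew shape with $m$ rows whose $i$-th row from the top has $\alpha_i$ boxes, where the leftmost box of row $i$ lies directly above the rightmost box of row $i+1$ and no other columns are shared. For $\pi\in S_m$, $\alpha_\pi=(\alpha_{\pi^{-1}(1)},\dots,\alpha_{\pi^{-1}(m)})$; so $\alpha_{(i\ i+1)}$ is $\alpha$ with the $i$-th and $(i+1)$-st entries swapped. A ribbon tableau is a filling of the boxes with positive integers. It is semistandard if entries weakly increase left to right along rows and strictly increase down columns (for a ribbon: each row is weakly increasing, and the rightmost entry of row $i+1$ is strictly greater than the leftmost entry of row $i$). The reverse reading word (RRW) reads each row right to left, rows taken top to bottom. A word is Yamanouchi if every prefix contains at least as many $k$'s as $(k+1)$'s for every $k\ge1$; a tableau is Yamanouchi if its RRW is. A Littlewood–Richardson (LR) tableau is one that is both semistandard and Yamanouchi; its content is $\mu=(\mu_1,\mu_2,\dots)$ with $\mu_k$ the number of entries equal to $k$. $R$-matrix algorithm on rows $i,i+1$ with $\alpha_i>\alpha_{i+1}$: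 form a left multiset $L$ = entries of row $i$ and a right multiset $R$ = entries of row $i+1$. Process each element $b$ of $R$ (in any order; the result is independent of the order): match $b$ to a not-yet-matched element of $L$ that is strictly less than $b$ and as large as possible among such; if no unmatched element of $L$ is less than $b$, match $b$ to a largest unmatched element of $L$. After all of $R$ is processed, exactly $\alpha_{i+1}$ elements of $L$ are matched and $\alpha_i-\alpha_{i+1}$ are unmatched. The new row $i$ consists of the matched elements of $L$ in weakly increasing order (length $\alpha_{i+1}$), and the new row $i+1$ consists of all elements of $R$ together with the unmatched elements of $L$ in weakly increasing order (length $\alpha_i$). Example: rows $1,3,3,4,7$ over $1,3,5$ become $1,4,7$ over $1,3,3,3,5$. This preserves the total content of the two rows and weak increase within each row. *)

theory Defs
  imports "HOL-Library.Multiset"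
begin

text \<open>A ribbon tableau is represented as the list of its rows, top row first
(row k of the paper is list index k-1); each row is the list of its entries
from left to right.\<close>

type_synonym ribbon_tableau = "nat list list"

definition shape :: "ribbon_tableau \<Rightarrow> nat list" where
  "shape T = map length T"

definition is_ribbon_shape :: "nat list \<Rightarrow> bool" where
  "is_ribbon_shape \<alpha> \<longleftrightarrow> (\<forall>a \<in> set \<alpha>. 2 \<le> a)"

definition positive_entries :: "ribbon_tableau \<Rightarrow> bool" where
  "positive_entries T \<longleftrightarrow> (\<forall>r \<in> set T. \<forall>x \<in> set r. 0 < x)"

text \<open>Semistandard ribbon tableau: rows weakly increase, and the rightmost entry
of row k+1 is strictly greater than the leftmost entry of row k (the column they share).\<close>
definition semistandard :: "ribbon_tableau \<Rightarrow> bool" where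
  "semistandard T \<longleftrightarrow>
     (\<forall>r \<in> set T. sorted r) \<and>
     (\<forall>k. Suc k < length T \<longrightarrow> hd (T ! k) < last (T ! Suc k))"

definition rrw :: "ribbon_tableau \<Rightarrow> nat list" where
  "rrw T = concat (map rev T)"

definition yamanouchi_word :: "nat list \<Rightarrow> bool" where
  "yamanouchi_word w \<longleftrightarrow>
     (\<forall>p k. 1 \<le> k \<longrightarrow> count (mset (take p w)) (Suc k) \<le> count (mset (take p w)) k)"

definition yamanouchi :: "ribbon_tableau \<Rightarrow> bool" where
  "yamanouchi T \<longleftrightarrow> yamanouchi_word (rrw T)"

definition LR_ribbon_tableau :: "ribbon_tableau \<Rightarrow> bool" where
  "LR_ribbon_tableau T \<longleftrightarrow>
     is_ribbon_shape (shape T) \<and> positive_entries T \<and> semistandard T \<and> yamanouchi T"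

text \<open>One step of the R-matrix matching: the state is (unmatched part of L,
matched part of L).\<close>
definition rmatch_step :: "nat \<Rightarrow> nat multiset \<times> nat multiset \<Rightarrow> nat multiset \<times> nat multiset" where
  "rmatch_step b st =
     (let U = fst st; M = snd st;
          c = (if \<exists>x \<in># U. x < b then Max {x \<in> set_mset U. x < b} else Max (set_mset U))
      in (U - {#c#}, M + {#c#}))"

text \<open>R-matrix algorithm on a top row (L) and bottom row (R), processing the elements
of R in the order given by the list bs (a rearrangement of R).
Returns (new top row, new bottom row).\<close>
definition rmatrix_rows :: "nat list \<Rightarrow> nat list \<Rightarrow> nat list \<Rightarrow> nat list \<times> nat list" where
  "rmatrix_rows bs toprow botrow =
     (let st = fold rmatch_step bs (mset toprow, {#})
      in (sorted_list_of_multiset (snd st), sorted_list_of_multiset (mset botrow + fst st)))"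

text \<open>A_(i i+1) for 0-based row index i (rows i and i+1 of the list = rows i+1, i+2 of the paper).\<close>
definition rmatrix_swap :: "nat list \<Rightarrow> nat \<Rightarrow> ribbon_tableau \<Rightarrow> ribbon_tableau" where
  "rmatrix_swap bs i T =
     (let (t', b') = rmatrix_rows bs (T ! i) (T ! Suc i) in T[i := t', Suc i := b'])"

end

theory Submission
  imports Defs
begin

text \<open>Fix k. Reading a sorted row backwards yields all its entries k+1 before any
entry k, so, given the word read before the row, the Yamanouchi condition for k holds
throughout the row iff it holds once the row's entries k+1 have been read. Prefixes
ending beyond row i+1 have the same content before and after the swap, so per k only
two inequalities change: one for the top row alone and one for both rows. The new
top row is a submultiset of the old one, which preserves the first. For the second,
either every k of row i stays on top, or some k is never matched; then each k+1 of
row i+1 was matched with a k, which keeps a k on top for it.\<close>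

lemma all_prefixes_append_iff:
  "(\<forall>p. P (u @ take p (xs @ ys))) \<longleftrightarrow>
     (\<forall>p. P (u @ take p xs)) \<and> (\<forall>p. P (u @ xs @ take p ys))"
proof safe
  fix p
  assume all: "\<forall>p. P (u @ take p (xs @ ys))"
  from all[rule_format, of "min p (length xs)"] show "P (u @ take p xs)"
    by (simp add: min_def split: if_splits)
  from all[rule_format, of "length xs + p"] show "P (u @ xs @ take p ys)"
    by simp
next
  fix p
  assume "\<forall>p. P (u @ take p xs)" "\<forall>p. P (u @ xs @ take p ys)"
  then show "P (u @ take p (xs @ ys))"
    by (cases "p \<le> length xs") auto
qed

lemma count_take_le: "count (mset (take p xs)) x \<le> count (mset xs) x"
  by (rule mset_subset_eq_count) (metis append_take_drop_id mset_append mset_subset_eq_add_left)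

lemma take_rev_sorted_all_Suc_no_self:
  fixes s :: "nat list"
  assumes "sorted s"
  shows "\<exists>j. count (mset (take j (rev s))) (Suc k) = count (mset s) (Suc k)
           \<and> count (mset (take j (rev s))) k = 0"
proof -
  let ?G = "takeWhile (\<lambda>x. k < x) (rev s)"
  have "sorted (rev (map id (rev s)))"
    using assms by simp
  then have G: "?G = filter (\<lambda>x. k < x) (rev s)"
    using filter_equals_takeWhile_sorted_rev[of id "rev s" k] by simp
  have "take (length ?G) (rev s) = ?G"
    by (metis takeWhile_eq_take)
  also have "mset \<dots> = filter_mset (\<lambda>x. k < x) (mset s)"
    unfolding G by (simp add: mset_filter)
  finally show ?thesis
    by (intro exI[of _ "length ?G"]) simp
qed

lemma prefixes_rev_sorted_iff:
  fixes s :: "nat list"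
  assumes "sorted s"
  shows "(\<forall>j. count (mset (u @ take j (rev s))) (Suc k) \<le> count (mset (u @ take j (rev s))) k)
     \<longleftrightarrow> count (mset u) (Suc k) + count (mset s) (Suc k) \<le> count (mset u) k"
proof
  assume all: "\<forall>j. count (mset (u @ take j (rev s))) (Suc k) \<le> count (mset (u @ take j (rev s))) k"
  obtain j where "count (mset (take j (rev s))) (Suc k) = count (mset s) (Suc k)"
    and "count (mset (take j (rev s))) k = 0"
    using take_rev_sorted_all_Suc_no_self[OF assms] by blast
  with all[rule_format, of j]
  show "count (mset u) (Suc k) + count (mset s) (Suc k) \<le> count (mset u) k"
    by simp
next
  assume bound: "count (mset u) (Suc k) + count (mset s) (Suc k) \<le> count (mset u) k"
  show "\<forall>j. count (mset (u @ take j (rev s))) (Suc k) \<le> count (mset (u @ take j (rev s))) k"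
  proof
    fix j
    have "count (mset (take j (rev s))) (Suc k) \<le> count (mset s) (Suc k)"
      using count_take_le[of j "rev s" "Suc k"] by simp
    with bound show "count (mset (u @ take j (rev s))) (Suc k) \<le> count (mset (u @ take j (rev s))) k"
      by simp
  qed
qed

definition rmatch_partner :: "nat \<Rightarrow> nat multiset \<Rightarrow> nat" where
  "rmatch_partner b U =
     (if \<exists>x \<in># U. x < b then Max {x \<in> set_mset U. x < b} else Max (set_mset U))"

lemma rmatch_step_eq:
  "rmatch_step b (U, M) = (U - {#rmatch_partner b U#}, M + {#rmatch_partner b U#})"
  unfolding rmatch_step_def rmatch_partner_def Let_def fst_conv snd_conv ..

lemma rmatch_partner_in: "U \<noteq> {#} \<Longrightarrow> rmatch_partner b U \<in># U"
proof -
  assume "U \<noteq> {#}"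
  then have "Max (set_mset U) \<in># U"
    by (simp add: Max_in)
  moreover have "Max {x \<in> set_mset U. x < b} \<in># U" if "\<exists>x \<in># U. x < b"
    using that Max_in[of "{x \<in> set_mset U. x < b}"] by auto
  ultimately show ?thesis
    unfolding rmatch_partner_def by simp
qed

lemma rmatch_partner_Suc: "k \<in># U \<Longrightarrow> rmatch_partner (Suc k) U = k"
  unfolding rmatch_partner_def by (auto intro!: Max_eqI)

lemma fold_rmatch_step_conserves:
  "length bs \<le> size U \<Longrightarrow> fold rmatch_step bs (U, M) = (U', M') \<Longrightarrow> U' + M' = U + M"
proof (induction bs arbitrary: U M)
  case (Cons b bs)
  let ?c = "rmatch_partner b U"
  have "?c \<in># U"
    using Cons.prems(1) by (auto intro: rmatch_partner_in)
  then have "(U - {#?c#}) + (M + {#?c#}) = U + M"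
    by simp
  moreover have "fold rmatch_step bs (U - {#?c#}, M + {#?c#}) = (U', M')"
    using Cons.prems(2) by (simp add: rmatch_step_eq)
  ultimately show ?case
    using Cons.IH[of "U - {#?c#}" "M + {#?c#}"] Cons.prems(1) \<open>?c \<in># U\<close>
    by (simp add: size_Diff_singleton)
qed simp

lemma fold_rmatch_step_unmatched_subset:
  "fold rmatch_step bs (U, M) = (U', M') \<Longrightarrow> U' \<subseteq># U"
proof (induction bs arbitrary: U M)
  case (Cons b bs)
  then show ?case
    by (simp add: rmatch_step_eq) (meson diff_subset_eq_self subset_mset.order_trans)
qed simp

text \<open>An entry k that is never matched is available whenever some k+1 is processed,
and then it is the partner of that k+1.\<close>

lemma fold_rmatch_step_matches_Suc:
  "fold rmatch_step bs (U, M) = (U', M') \<Longrightarrow> k \<in># U' \<Longrightarrow>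
     count M k + count (mset bs) (Suc k) \<le> count M' k"
proof (induction bs arbitrary: U M)
  case (Cons b bs)
  let ?c = "rmatch_partner b U"
  have fold: "fold rmatch_step bs (U - {#?c#}, M + {#?c#}) = (U', M')"
    using Cons.prems(1) by (simp add: rmatch_step_eq)
  have IH: "count (M + {#?c#}) k + count (mset bs) (Suc k) \<le> count M' k"
    using Cons.IH[OF fold Cons.prems(2)] .
  have "k \<in># U"
    using fold_rmatch_step_unmatched_subset[OF fold] Cons.prems(2) by (meson in_diffD mset_subset_eqD)
  then have "b = Suc k \<Longrightarrow> ?c = k"
    by (simp add: rmatch_partner_Suc)
  with IH show ?case
    by (cases "b = Suc k") (auto split: if_splits)
qed simp

lemma rmatrix_rows_fold:
  assumes "fold rmatch_step bs (mset L, {#}) = (U, M)" "rmatrix_rows bs L R = (t', b')"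
  shows "mset t' = M" "mset b' = mset R + U"
  using assms by (auto simp: rmatrix_rows_def)

lemma rmatrix_rows_sorted:
  "rmatrix_rows bs L R = (t', b') \<Longrightarrow> sorted t' \<and> sorted b'"
  by (auto simp: rmatrix_rows_def Let_def)

lemma rmatrix_rows_conserves:
  assumes "length bs \<le> length L" "rmatrix_rows bs L R = (t', b')"
  shows "mset t' + mset b' = mset L + mset R"
proof -
  obtain U M where fold: "fold rmatch_step bs (mset L, {#}) = (U, M)"
    by (metis surj_pair)
  have "U + M = mset L"
    using fold_rmatch_step_conserves[OF _ fold] assms(1) by simp
  with rmatrix_rows_fold[OF fold assms(2)] show ?thesis
    by (simp add: ac_simps)
qed

lemma rmatrix_rows_top_subset:
  assumes "length bs \<le> length L" "rmatrix_rows bs L R = (t', b')"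
  shows "mset t' \<subseteq># mset L"
proof -
  obtain U M where fold: "fold rmatch_step bs (mset L, {#}) = (U, M)"
    by (metis surj_pair)
  have "U + M = mset L"
    using fold_rmatch_step_conserves[OF _ fold] assms(1) by simp
  with rmatrix_rows_fold(1)[OF fold assms(2)] show ?thesis
    by (metis mset_subset_eq_add_right)
qed

lemma rmatrix_rows_matches_Suc:
  assumes "length bs \<le> length L" "mset bs = mset R" "rmatrix_rows bs L R = (t', b')"
    and "count (mset t') k < count (mset L) k"
  shows "count (mset R) (Suc k) \<le> count (mset t') k"
proof -
  obtain U M where fold: "fold rmatch_step bs (mset L, {#}) = (U, M)"
    by (metis surj_pair)
  have t': "mset t' = M"
    by (rule rmatrix_rows_fold(1)[OF fold assms(3)])
  have "U + M = mset L"
    using fold_rmatch_step_conserves[OF _ fold] assms(1) by simp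
  then have "count U k + count M k = count (mset L) k"
    by (metis count_union)
  moreover have "count M k < count (mset L) k"
    using assms(4) t' by simp
  ultimately have "0 < count U k"
    by linarith
  then have "k \<in># U"
    by simp
  from fold_rmatch_step_matches_Suc[OF fold this] show ?thesis
    using assms(2) t' by simp
qed

lemma rmatrix_rows_preserves_balance:
  assumes len: "length R \<le> length L" and bs: "mset bs = mset R"
    and rows: "rmatrix_rows bs L R = (t', b')"
    and old1: "a + count (mset L) (Suc k) \<le> c"
    and old2: "a + count (mset L) (Suc k) + count (mset R) (Suc k) \<le> c + count (mset L) k"
  shows "a + count (mset t') (Suc k) \<le> c"
    and "a + count (mset t') (Suc k) + count (mset b') (Suc k) \<le> c + count (mset t') k"
proof -
  let ?c = "\<lambda>w x. count (mset w) x"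
  have lenbs: "length bs \<le> length L"
    using len bs by (metis size_mset)
  have cons: "?c t' x + ?c b' x = ?c L x + ?c R x" for x
    using rmatrix_rows_conserves[OF lenbs rows] by (metis count_union)
  have sub: "?c t' x \<le> ?c L x" for x
    using rmatrix_rows_top_subset[OF lenbs rows] by (rule mset_subset_eq_count)
  show "a + ?c t' (Suc k) \<le> c"
    using old1 sub[of "Suc k"] by linarith
  show "a + ?c t' (Suc k) + ?c b' (Suc k) \<le> c + ?c t' k"
  proof (cases "?c t' k < ?c L k")
    case True
    with rmatrix_rows_matches_Suc[OF lenbs bs rows] have "?c R (Suc k) \<le> ?c t' k" .
    with old1 cons[of "Suc k"] show ?thesis by linarith
  next
    case False
    with old2 cons[of "Suc k"] sub[of k] show ?thesis by linarith
  qed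
qed

lemma rmatrix_rows_preserves_prefix_condition:
  fixes L R W V :: "nat list" and k :: nat
  defines "P \<equiv> \<lambda>w. count (mset w) (Suc k) \<le> count (mset w) k"
  assumes sorted: "sorted L" "sorted R"
    and len: "length R \<le> length L" and bs: "mset bs = mset R"
    and rows: "rmatrix_rows bs L R = (t', b')"
    and old: "\<forall>p. P (take p (W @ rev L @ rev R @ V))"
  shows "\<forall>p. P (take p (W @ rev t' @ rev b' @ V))"
proof -
  have split: "(\<forall>p. P (take p (W @ rev X @ rev Y @ V))) \<longleftrightarrow>
      (\<forall>p. P (take p W)) \<and> (\<forall>p. P (W @ take p (rev X))) \<and>
      (\<forall>p. P (W @ rev X @ take p (rev Y))) \<and> (\<forall>p. P (W @ rev X @ rev Y @ take p V))"
    for X Y :: "nat list"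
    using all_prefixes_append_iff[of P "[]" W "rev X @ rev Y @ V"]
      all_prefixes_append_iff[of P W "rev X" "rev Y @ V"]
      all_prefixes_append_iff[of P "W @ rev X" "rev Y" V]
    by (simp del: take_append)
  from old have old_parts: "\<forall>p. P (take p W)" "\<forall>p. P (W @ take p (rev L))"
      "\<forall>p. P (W @ rev L @ take p (rev R))" "\<forall>p. P (W @ rev L @ rev R @ take p V)"
    unfolding split by blast+
  have sorted_new: "sorted t'" "sorted b'"
    using rmatrix_rows_sorted[OF rows] by simp_all
  have old1: "count (mset W) (Suc k) + count (mset L) (Suc k) \<le> count (mset W) k"
    using old_parts(2) prefixes_rev_sorted_iff[OF sorted(1), of W k] unfolding P_def by simp
  have old2: "count (mset W) (Suc k) + count (mset L) (Suc k) + count (mset R) (Suc k)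
      \<le> count (mset W) k + count (mset L) k"
    using old_parts(3) prefixes_rev_sorted_iff[OF sorted(2), of "W @ rev L" k] unfolding P_def by simp
  note balance = rmatrix_rows_preserves_balance[OF len bs rows old1 old2]
  have "\<forall>p. P (W @ take p (rev t'))"
    using balance(1) prefixes_rev_sorted_iff[OF sorted_new(1), of W k] unfolding P_def by simp
  moreover have "\<forall>p. P (W @ rev t' @ take p (rev b'))"
    using balance(2) prefixes_rev_sorted_iff[OF sorted_new(2), of "W @ rev t'" k] unfolding P_def by simp
  moreover have "\<forall>p. P (W @ rev t' @ rev b' @ take p V)"
  proof -
    have "length bs \<le> length L"
      using len bs by (metis size_mset)
    then have "mset (W @ rev t' @ rev b' @ x) = mset (W @ rev L @ rev R @ x)" for x
      using rmatrix_rows_conserves[OF _ rows] by (simp add: ac_simps)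
    with old_parts(4) show ?thesis
      unfolding P_def by metis
  qed
  ultimately show ?thesis
    using old_parts(1) unfolding split by blast
qed

theorem lemma3p1:
  fixes A :: ribbon_tableau and i :: nat and bs :: "nat list"
  assumes "LR_ribbon_tableau A"
    and "Suc i < length A"
    and "length (A ! Suc i) < length (A ! i)"
    and "mset bs = mset (A ! Suc i)"
  shows "yamanouchi (rmatrix_swap bs i A)"
proof -
  define P S where "P = take i A" and "S = drop (Suc (Suc i)) A"
  have A: "A = P @ A ! i # A ! Suc i # S"
    using assms(2) unfolding P_def S_def
    by (metis Cons_nth_drop_Suc Suc_lessD append_take_drop_id)
  obtain t' b' where rows: "rmatrix_rows bs (A ! i) (A ! Suc i) = (t', b')"
    by fastforce
  have "rmatrix_swap bs i A = P @ t' # b' # S"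
    using rows assms(2) unfolding rmatrix_swap_def P_def S_def
    by (simp add: upd_conv_take_nth_drop)
  moreover have "sorted (A ! i)" "sorted (A ! Suc i)"
    using assms(1,2) by (auto simp: LR_ribbon_tableau_def semistandard_def)
  moreover have "rrw A = rrw P @ rev (A ! i) @ rev (A ! Suc i) @ rrw S"
    using arg_cong[OF A, of rrw] by (simp add: rrw_def)
  then have "yamanouchi_word (rrw P @ rev (A ! i) @ rev (A ! Suc i) @ rrw S)"
    using assms(1) by (simp add: LR_ribbon_tableau_def yamanouchi_def)
  ultimately show ?thesis
    using rmatrix_rows_preserves_prefix_condition[OF _ _ _ assms(4) rows] assms(3)
    unfolding yamanouchi_def yamanouchi_word_def by (simp add: rrw_def)
qed

end
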